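(* Let $k\ge 0$ be an integer and $p\in(1,\infty)$. For every $f\in W^{k+2,p}(0,\infty)$, \[ \|(If)'\|_{W^{k,p}}\le C_{k,p}\,\|f''\|_{W^{k,p}}\le C_{k,p}\|f\|_{W^{k+2,p}}, \] where $C_{k,p}$ depends only on $k$ and $p$.
   Context: All functions are defined on $[0,\infty)$ and $L^p=L^p(0,\infty)$. For an integer $k\ge0$, $\|f\|_{W^{k,p}}=\sum_{j=0}^{k}\|f^{(j)}\|_{L^p}$. For a function $f$ which is $C^1$ up to $0$, \[ If(x)=\int_0^x\frac{f(y)-f(0)-yf'(0)}{y^2}\,dy . \] *)

theory Defs
  imports "HOL-Analysis.Analysis"
begin

definition in_Lp :: "real \<Rightarrow> (real \<Rightarrow> real) \<Rightarrow> bool" where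
  "in_Lp p g \<longleftrightarrow> set_borel_measurable lborel {0<..} g \<and>
     set_integrable lborel {0<..} (\<lambda>x. \<bar>g x\<bar> powr p)"

definition Lp_norm :: "real \<Rightarrow> (real \<Rightarrow> real) \<Rightarrow> real" where
  "Lp_norm p g = (LINT x:{0<..}|lborel. \<bar>g x\<bar> powr p) powr (1 / p)"

text \<open>F is a W^{m,p}(0,infinity) function together with its derivatives:
  F 0 is the function, F j its j-th (weak) derivative, represented by the
  continuous-up-to-0 (locally absolutely continuous) representatives for j < m.\<close>
definition sobolev :: "nat \<Rightarrow> real \<Rightarrow> (nat \<Rightarrow> real \<Rightarrow> real) \<Rightarrow> bool" where
  "sobolev m p F \<longleftrightarrow> (\<forall>j\<le>m. in_Lp p (F j)) \<and>
     (\<forall>j<m. \<forall>a b. 0 \<le> a \<and> a \<le> b \<longrightarrow>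
        set_integrable lborel {a..b} (F (Suc j)) \<and>
        F j b - F j a = (LINT x:{a..b}|lborel. F (Suc j) x))"

definition sobolev_norm :: "nat \<Rightarrow> real \<Rightarrow> (nat \<Rightarrow> real \<Rightarrow> real) \<Rightarrow> real" where
  "sobolev_norm m p F = (\<Sum>j\<le>m. Lp_norm p (F j))"

definition Iop :: "(nat \<Rightarrow> real \<Rightarrow> real) \<Rightarrow> real \<Rightarrow> real" where
  "Iop F x = (LINT y:{0..x}|lborel. (F 0 y - F 0 0 - y * F 1 0) / y\<^sup>2)"

end

theory Submission
  imports Defs
begin

(*
  Taylor's formula with integral remainder gives, for y > 0,
    (If)'(y) = (f(y) - f(0) - y f'(0)) / y^2 = T_0 f''(y),
  where T_j g(y) = int_0^1 (1 - s) s^j g(s y) ds is hardy_avg j g.  Differentiating under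
  the integral sign (Fubini) gives (T_j g)' = T_(j+1) g', so the j-th derivative of (If)'
  is T_j f^(j+2).  Each T_j is bounded on L^p(0,oo) for p > 1 by a Hardy-type inequality:
  |T_j g(y)| <= int_0^1 |g(s y)| ds; Jensen's inequality for the probability density
  s^(-1/2) / 2 on [0,1] bounds the p-th power of the right-hand side by
  2^(p-1) int_0^1 s^((p-1)/2) |g(s y)|^p ds; integrating in y (Tonelli) turns |g(s y)|^p
  into ||g||_p^p / s, and int_0^1 s^((p-3)/2) ds = 2/(p-1) is finite exactly because p > 1.
*)

section \<open>Dilations and iterated integrals\<close>

lemma set_integral_scale:
  fixes g :: "real \<Rightarrow> real"
  assumes c: "c > 0"
  shows "(LINT x:{a..b}|lborel. g (c * x)) = (LINT u:{c*a..c*b}|lborel. g u) / c"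
proof -
  have "(LINT u:{c*a..c*b}|lborel. g u) = (\<integral>u. indicator {c*a..c*b} u * g u \<partial>lborel)"
    by (simp add: set_lebesgue_integral_def)
  also have "\<dots> = c * (\<integral>x. indicator {c*a..c*b} (c*x) * g (c*x) \<partial>lborel)"
    using lborel_integral_real_affine[of c "\<lambda>u. indicator {c*a..c*b} u * g u" 0] c by simp
  also have "(\<lambda>x. indicator {c*a..c*b} (c*x) * g (c*x)) = (\<lambda>x. indicator {a..b} x * g (c*x) :: real)"
    using c by (auto simp: fun_eq_iff indicator_def)
  finally show ?thesis
    using c by (simp add: set_lebesgue_integral_def)
qed

lemma set_integrable_scale:
  fixes g :: "real \<Rightarrow> real"
  assumes c: "c > 0" and "set_integrable lborel {c*a..c*b} g"
  shows "set_integrable lborel {a..b} (\<lambda>x. g (c * x))"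
proof -
  have "integrable lborel (\<lambda>x. indicator {c*a..c*b} (0 + c*x) *\<^sub>R g (0 + c*x))"
    using lborel_integrable_real_affine[of "\<lambda>u. indicator {c*a..c*b} u *\<^sub>R g u" c 0] assms
    by (simp add: set_integrable_def)
  also have "(\<lambda>x. indicator {c*a..c*b} (0 + c*x) *\<^sub>R g (0 + c*x)) = (\<lambda>x. indicator {a..b} x *\<^sub>R g (c*x))"
    using c by (auto simp: fun_eq_iff indicator_def)
  finally show ?thesis
    by (simp add: set_integrable_def)
qed

lemma nn_integral_lborel_scale:
  fixes f :: "real \<Rightarrow> ennreal"
  assumes "c > 0" and "f \<in> borel_measurable borel"
  shows "(\<integral>\<^sup>+x. f x \<partial>lborel) = ennreal c * (\<integral>\<^sup>+x. f (c * x) \<partial>lborel)"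
  using nn_integral_real_affine[of f c 0] assms by simp

lemma integrable_pair_lborel_fibre_bound:
  fixes F :: "real \<times> real \<Rightarrow> real"
  assumes [measurable]: "F \<in> borel_measurable (lborel \<Otimes>\<^sub>M lborel)"
    and fibre: "\<And>s. (\<integral>\<^sup>+y. ennreal \<bar>F (s, y)\<bar> \<partial>lborel) \<le> B * indicator {0..c} s"
    and B: "B < \<infinity>"
  shows "integrable (lborel \<Otimes>\<^sub>M lborel) F"
proof (rule integrableI_bounded)
  have "(\<integral>\<^sup>+x. ennreal (norm (F x)) \<partial>(lborel \<Otimes>\<^sub>M lborel)) =
      (\<integral>\<^sup>+s. (\<integral>\<^sup>+y. ennreal \<bar>F (s, y)\<bar> \<partial>lborel) \<partial>lborel)"
    by (subst lborel.nn_integral_fst[symmetric]) auto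
  also have "\<dots> \<le> (\<integral>\<^sup>+s. B * indicator {0..c} s \<partial>lborel)"
    by (intro nn_integral_mono fibre)
  also have "\<dots> = B * emeasure lborel {0..c}"
    by (rule nn_integral_cmult_indicator) simp
  also have "\<dots> < \<infinity>"
    using B by (cases "0 \<le> c") (simp_all add: ennreal_mult_less_top)
  finally show "(\<integral>\<^sup>+x. ennreal (norm (F x)) \<partial>(lborel \<Otimes>\<^sub>M lborel)) < \<infinity>" .
qed simp

section \<open>Functions on the half-line\<close>

definition primitive_nonneg :: "(real \<Rightarrow> real) \<Rightarrow> (real \<Rightarrow> real) \<Rightarrow> bool" where
  "primitive_nonneg \<psi> \<eta> \<longleftrightarrow> (\<forall>a b. 0 \<le> a \<and> a \<le> b \<longrightarrow>
     set_integrable lborel {a..b} \<eta> \<and> \<psi> b - \<psi> a = (LINT x:{a..b}|lborel. \<eta> x))"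

lemma sobolev_altdef:
  "sobolev m p F \<longleftrightarrow> (\<forall>j\<le>m. in_Lp p (F j)) \<and> (\<forall>j<m. primitive_nonneg (F j) (F (Suc j)))"
  unfolding sobolev_def primitive_nonneg_def by blast

lemma primitive_nonneg_continuous_on:
  assumes "primitive_nonneg \<psi> \<eta>" "0 \<le> b"
  shows "continuous_on {0..b} \<psi>"
proof -
  have "\<eta> integrable_on {0..b}"
    using assms set_borel_integral_eq_integral(1) unfolding primitive_nonneg_def by blast
  then have "continuous_on {0..b} (\<lambda>x. \<psi> 0 + integral {0..x} \<eta>)"
    by (intro continuous_intros indefinite_integral_continuous_1)
  moreover have "\<psi> 0 + integral {0..x} \<eta> = \<psi> x" if "x \<in> {0..b}" for x
    using assms that set_borel_integral_eq_integral(2)[of "{0..x}" \<eta>]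
    unfolding primitive_nonneg_def by force
  ultimately show ?thesis
    using continuous_on_cong by (metis (no_types, lifting))
qed

lemma primitive_nonneg_dilation:
  assumes "primitive_nonneg \<psi> \<eta>" "0 < s" "0 \<le> a" "a \<le> b"
  shows "(LINT y:{a..b}|lborel. \<eta> (s * y)) = (\<psi> (s * b) - \<psi> (s * a)) / s"
proof -
  have "0 \<le> s * a" "s * a \<le> s * b"
    using assms by (simp_all add: mult_left_mono)
  then show ?thesis
    using assms set_integral_scale[where c = s and g = \<eta> and a = a and b = b]
    unfolding primitive_nonneg_def by simp
qed

lemma abs_le_1_plus_powr: "1 \<le> p \<Longrightarrow> \<bar>x :: real\<bar> \<le> 1 + \<bar>x\<bar> powr p"
proof (cases "\<bar>x\<bar> \<le> 1")
  case False
  assume "1 \<le> p"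
  then have "\<bar>x\<bar> powr 1 \<le> \<bar>x\<bar> powr p"
    using False by (intro powr_mono) auto
  then show ?thesis
    using False by simp
qed (simp add: add_increasing2)

lemma Lp_imp_set_integrable_Icc:
  fixes \<phi> :: "real \<Rightarrow> real"
  assumes p: "1 \<le> p" and [measurable]: "\<phi> \<in> borel_measurable borel"
    and Lp: "set_integrable lborel {0<..} (\<lambda>x. \<bar>\<phi> x\<bar> powr p)"
  shows "set_integrable lborel {0..b} \<phi>"
proof -
  have "set_integrable lborel {0<..b} (\<lambda>x. \<bar>\<phi> x\<bar> powr p)"
    by (rule set_integrable_subset[OF Lp]) auto
  moreover have "set_integrable lborel {0<..b} (\<lambda>x. 1 :: real)"
    by (cases "0 \<le> b") (auto simp: set_integrable_def intro: integrable_real_indicator)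
  ultimately have "integrable lborel (\<lambda>x. indicator {0<..b} x * (1 + \<bar>\<phi> x\<bar> powr p))"
    unfolding set_integrable_def by (simp add: algebra_simps)
  then show ?thesis
    unfolding set_integrable_def
  proof (rule Bochner_Integration.integrable_bound)
    show "AE x in lborel. norm (indicator {0..b} x *\<^sub>R \<phi> x) \<le> norm (indicator {0<..b} x * (1 + \<bar>\<phi> x\<bar> powr p))"
      using AE_lborel_singleton[of 0]
      by eventually_elim (use abs_le_1_plus_powr[OF p] in \<open>auto split: split_indicator\<close>)
  qed measurable
qed

lemma Lp_imp_set_integrable_dilation:
  fixes \<phi> :: "real \<Rightarrow> real"
  assumes "1 \<le> p" "\<phi> \<in> borel_measurable borel"
    and "set_integrable lborel {0<..} (\<lambda>x. \<bar>\<phi> x\<bar> powr p)" and "0 < y"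
  shows "set_integrable lborel {0..1} (\<lambda>s. \<phi> (s * y))"
  using set_integrable_scale[OF \<open>0 < y\<close>, of 0 1 \<phi>] Lp_imp_set_integrable_Icc[OF assms(1-3), of y]
  by (simp add: mult.commute)

lemma primitive_nonneg_zero_extension:
  assumes "primitive_nonneg \<psi> \<eta>"
  shows "primitive_nonneg (\<lambda>x. indicator {0..} x * \<psi> x) (\<lambda>x. indicator {0..} x * \<eta> x)"
proof -
  have "(\<lambda>x. indicator {a..b} x *\<^sub>R (indicator {0..} x * \<eta> x)) = (\<lambda>x. indicator {a..b} x *\<^sub>R \<eta> x)"
    if "0 \<le> a" for a b :: real
    using that by (auto simp: fun_eq_iff indicator_def)
  then show ?thesis
    using assms unfolding primitive_nonneg_def set_integrable_def set_lebesgue_integral_def by auto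
qed

lemma borel_measurable_zero_extension:
  fixes \<phi> :: "real \<Rightarrow> real"
  assumes "set_borel_measurable lborel {0<..} \<phi>"
  shows "(\<lambda>x. indicator {0..} x * \<phi> x :: real) \<in> borel_measurable borel"
proof -
  have [measurable]: "(\<lambda>x. indicator {0<..} x * \<phi> x :: real) \<in> borel_measurable borel"
    using assms by (simp add: set_borel_measurable_def)
  have "(\<lambda>x. indicator {0<..} x * \<phi> x + indicator {0} x * \<phi> 0 :: real) \<in> borel_measurable borel"
    by measurable
  also have "(\<lambda>x. indicator {0<..} x * \<phi> x + indicator {0} x * \<phi> 0 :: real) = (\<lambda>x. indicator {0..} x * \<phi> x)"
    by (auto simp: fun_eq_iff split: split_indicator)
  finally show ?thesis .
qed

lemma Ioi_powr_zero_extension: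
  fixes \<phi> :: "real \<Rightarrow> real"
  shows "(\<lambda>x. indicator {0<..} x *\<^sub>R \<bar>indicator {0..} x * \<phi> x\<bar> powr p) = (\<lambda>x. indicator {0<..} x *\<^sub>R \<bar>\<phi> x\<bar> powr p)"
  by (auto simp: fun_eq_iff indicator_def)

lemma in_Lp_zero_extension:
  assumes "in_Lp p \<phi>"
  shows "in_Lp p (\<lambda>x. indicator {0..} x * \<phi> x)"
proof -
  have [measurable]: "(\<lambda>x. indicator {0..} x * \<phi> x) \<in> borel_measurable borel"
    using assms by (intro borel_measurable_zero_extension) (simp add: in_Lp_def)
  show ?thesis
    using assms unfolding in_Lp_def set_integrable_def Ioi_powr_zero_extension
    by (simp add: set_borel_measurable_def)
qed

lemma Lp_norm_zero_extension: "Lp_norm p (\<lambda>x. indicator {0..} x * \<phi> x) = Lp_norm p \<phi>"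
  unfolding Lp_norm_def set_lebesgue_integral_def Ioi_powr_zero_extension ..

lemma sobolev_zero_extension:
  assumes "sobolev m p F"
  shows "sobolev m p (\<lambda>j x. indicator {0..} x * F j x)"
  using assms in_Lp_zero_extension primitive_nonneg_zero_extension
  unfolding sobolev_altdef by blast

lemma Iop_zero_extension: "Iop (\<lambda>j x. indicator {0..} x * F j x) = Iop F"
  unfolding Iop_def set_lebesgue_integral_def
  by (intro ext Bochner_Integration.integral_cong) (auto simp: indicator_def)

section \<open>A weighted Jensen inequality\<close>

lemma powr_ge_tangent:
  fixes c x p :: real
  assumes "1 \<le> p" "0 < c" "0 \<le> x"
  shows "c powr p + p * c powr (p - 1) * (x - c) \<le> x powr p"
proof (cases "x = 0")
  case True
  have "c powr (p - 1) * c = c powr p"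
    using assms by (simp add: powr_diff)
  then have "c powr p + p * c powr (p - 1) * (x - c) = c powr p * (1 - p)"
    using True by (simp add: algebra_simps)
  also have "\<dots> \<le> 0"
    using assms by (simp add: mult_nonneg_nonpos)
  finally show ?thesis
    using True by simp
next
  case False
  have deriv: "((\<lambda>x. x powr p) has_field_derivative p * c powr (p - 1)) (at c within {0<..})"
    using assms by (auto intro!: derivative_eq_intros)
  have "p * c powr (p - 1) * (x - c) \<le> x powr p - c powr p"
    by (rule convex_on_imp_above_tangent[OF powr_convex[OF assms(1)] _ _ _ deriv])
       (use assms False in \<open>auto simp: interior_open\<close>)
  then show ?thesis
    by simp
qed

lemma jensen_powr_weighted:
  fixes w h :: "'a \<Rightarrow> real"
  assumes p: "1 \<le> p" and w: "\<And>x. 0 \<le> w x" and h: "\<And>x. 0 \<le> h x"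
    and iw: "integrable M w" and w1: "(\<integral>x. w x \<partial>M) = 1"
    and iwh: "integrable M (\<lambda>x. w x * h x)" and iwhp: "integrable M (\<lambda>x. w x * h x powr p)"
  shows "(\<integral>x. w x * h x \<partial>M) powr p \<le> (\<integral>x. w x * h x powr p \<partial>M)"
proof -
  define c where "c = (\<integral>x. w x * h x \<partial>M)"
  have "0 \<le> c"
    unfolding c_def using w h by (intro integral_nonneg_AE) auto
  show ?thesis
  proof (cases "c = 0")
    case True
    then show ?thesis
      using w h p unfolding c_def[symmetric] by (auto intro!: integral_nonneg_AE)
  next
    case False
    with \<open>0 \<le> c\<close> have c: "0 < c" by simp
    \<comment> \<open>integrate the tangent line of \<open>x powr p\<close> at the mean \<open>c\<close>\<close>
    define a where "a = p * c powr (p - 1)"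
    have tangent: "(\<lambda>x. w x * (c powr p + a * (h x - c))) =
        (\<lambda>x. (c powr p - a * c) * w x + a * (w x * h x))"
      by (auto simp: fun_eq_iff algebra_simps)
    have int_tangent: "integrable M (\<lambda>x. w x * (c powr p + a * (h x - c)))"
      unfolding tangent using iw iwh by simp
    have "(c powr p - a * c) * (\<integral>x. w x \<partial>M) + a * c = (\<integral>x. w x * (c powr p + a * (h x - c)) \<partial>M)"
      unfolding tangent using iw iwh by (simp add: c_def)
    also have "\<dots> \<le> (\<integral>x. w x * h x powr p \<partial>M)"
      using int_tangent iwhp unfolding a_def
      by (intro integral_mono mult_left_mono powr_ge_tangent p c h w)
    finally show ?thesis
      using w1 unfolding c_def[symmetric] by simp
  qed
qed

lemma nn_integral_powr_01:
  fixes a :: real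
  assumes "-1 < a"
  shows "(\<integral>\<^sup>+x. ennreal (indicator {0..1} x * x powr a) \<partial>lborel) = ennreal (1 / (a + 1))"
proof -
  have "((\<lambda>x. x powr a) has_integral (1 powr (a + 1) / (a + 1))) {0..1}"
    by (rule has_integral_powr_from_0) (use assms in auto)
  then have "integral\<^sup>N lborel (\<lambda>x. indicator {0..1} x * x powr a) = 1 / (a + 1)"
    by (intro nn_integral_has_integral_lebesgue) auto
  then show ?thesis
    by simp
qed

lemma has_bochner_integral_powr_neg_half_01:
  "has_bochner_integral lborel (\<lambda>s. indicator {0..1} s * s powr (-1/2) / (2 :: real)) 1"
proof (rule has_bochner_integral_nn_integral)
  have "(\<integral>\<^sup>+s. ennreal (indicator {0..1} s * s powr (-1/2) / 2) \<partial>lborel) =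
      (\<integral>\<^sup>+s. ennreal (indicator {0..1} s * s powr (-1/2)) * ennreal (1/2) \<partial>lborel)"
    by (intro nn_integral_cong, subst ennreal_mult'[symmetric]) auto
  also have "\<dots> = ennreal 2 * ennreal (1/2)"
    using nn_integral_powr_01[of "-1/2"] by (simp add: nn_integral_multc)
  also have "\<dots> = ennreal 1"
    by (subst ennreal_mult'[symmetric]) auto
  finally show "(\<integral>\<^sup>+s. ennreal (indicator {0..1} s * s powr (-1/2) / 2) \<partial>lborel) = ennreal 1" .
qed auto

lemma powr_set_integral_01_le:
  fixes g :: "real \<Rightarrow> real"
  assumes p: "1 \<le> p" and [measurable]: "g \<in> borel_measurable borel" and g: "\<And>s. 0 \<le> g s"
    and ig: "set_integrable lborel {0..1} g"
    and igp: "set_integrable lborel {0..1} (\<lambda>s. s powr ((p - 1) / 2) * g s powr p)"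
  shows "(LINT s:{0..1}|lborel. g s) powr p \<le>
    2 powr (p - 1) * (LINT s:{0..1}|lborel. s powr ((p - 1) / 2) * g s powr p)"
proof -
  \<comment> \<open>Jensen for the probability density \<open>s powr (-1/2) / 2\<close> on \<open>[0,1]\<close>\<close>
  define w where "w s = indicator {0..1} s * s powr (-1/2) / 2" for s :: real
  define h where "h s = 2 * s powr (1/2) * g s" for s
  have w: "integrable lborel w" "(\<integral>s. w s \<partial>lborel) = 1"
    using has_bochner_integral_powr_neg_half_01 unfolding has_bochner_integral_iff w_def[abs_def] by auto
  have w0: "0 \<le> w s" for s
    unfolding w_def by simp
  have wh: "w s * h s = indicator {0..1} s * g s" if "s \<noteq> 0" for s
  proof (cases "s \<in> {0..1}")
    case True
    with that have "s powr (-1/2) * s powr (1/2) = 1"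
      by (simp add: powr_add[symmetric])
    then show ?thesis
      unfolding w_def h_def by (simp add: algebra_simps)
  qed (simp add: w_def)
  have whp: "w s * h s powr p = 2 powr (p - 1) * (indicator {0..1} s * (s powr ((p - 1) / 2) * g s powr p))" for s
  proof (cases "s \<in> {0<..1}")
    case True
    have "h s powr p = 2 powr p * (s powr (p / 2) * g s powr p)"
      unfolding h_def using True g by (simp add: powr_mult powr_powr)
    moreover have "s powr (-1/2) * s powr (p / 2) = s powr ((p - 1) / 2)"
      by (simp add: powr_add[symmetric] diff_divide_distrib)
    moreover have "2 powr p = 2 * 2 powr (p - 1)"
      by (simp add: powr_diff)
    ultimately show ?thesis
      using True unfolding w_def by (simp add: mult_ac)
  next
    case False
    then have "s \<notin> {0..1} \<or> s = 0"
      by auto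
    then show ?thesis
      unfolding w_def h_def by auto
  qed
  have ae: "AE s in lborel. indicator {0..1} s * g s = w s * h s"
    using AE_lborel_singleton[of 0] by eventually_elim (simp add: wh)
  then have mean: "(LINT s:{0..1}|lborel. g s) = (\<integral>s. w s * h s \<partial>lborel)"
    unfolding set_lebesgue_integral_def by (intro integral_cong_AE) (auto simp: w_def h_def)
  have "integrable lborel (\<lambda>s. w s * h s)"
    using ig ae unfolding set_integrable_def
    by (intro integrable_cong_AE_imp[OF _ _ ae]) (auto simp: w_def h_def)
  moreover have "integrable lborel (\<lambda>s. w s * h s powr p)"
    unfolding whp using igp by (simp add: set_integrable_def)
  ultimately have "(LINT s:{0..1}|lborel. g s) powr p \<le> (\<integral>s. w s * h s powr p \<partial>lborel)"
    unfolding mean using p by (intro jensen_powr_weighted w w0) (auto simp: h_def g)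
  also have "\<dots> = 2 powr (p - 1) * (LINT s:{0..1}|lborel. s powr ((p - 1) / 2) * g s powr p)"
    unfolding whp set_lebesgue_integral_def by simp
  finally show ?thesis .
qed

section \<open>The averaging operators\<close>

definition hardy_avg :: "nat \<Rightarrow> (real \<Rightarrow> real) \<Rightarrow> real \<Rightarrow> real" where
  "hardy_avg j g y = (LINT s:{0..1}|lborel. (1 - s) * s ^ j * g (s * y))"

lemma borel_measurable_hardy_avg [measurable]:
  assumes [measurable]: "g \<in> borel_measurable borel"
  shows "hardy_avg j g \<in> borel_measurable borel"
  unfolding hardy_avg_def set_lebesgue_integral_def by measurable

lemma abs_hardy_avg_le:
  fixes g :: "real \<Rightarrow> real"
  assumes [measurable]: "g \<in> borel_measurable borel"
    and ig: "set_integrable lborel {0..1} (\<lambda>s. g (s * y))"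
  shows "\<bar>hardy_avg j g y\<bar> \<le> (LINT s:{0..1}|lborel. \<bar>g (s * y)\<bar>)"
proof -
  have i1: "integrable lborel (\<lambda>s. indicator {0..1} s * \<bar>g (s * y)\<bar>)"
    using set_integrable_abs[OF ig] by (simp add: set_integrable_def)
  have bound: "\<bar>indicator {0..1} s * ((1 - s) * s ^ j * g (s * y))\<bar> \<le> indicator {0..1} s * \<bar>g (s * y)\<bar>"
    for s :: real
  proof (cases "s \<in> {0..1}")
    case True
    then have "\<bar>(1 - s) * s ^ j\<bar> \<le> 1"
      by (auto simp: abs_mult intro!: mult_le_one power_le_one)
    then have "\<bar>(1 - s) * s ^ j\<bar> * \<bar>g (s * y)\<bar> \<le> 1 * \<bar>g (s * y)\<bar>"
      by (intro mult_right_mono) auto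
    then show ?thesis
      using True by (simp add: abs_mult)
  qed simp
  have "\<bar>hardy_avg j g y\<bar> \<le> (\<integral>s. \<bar>indicator {0..1} s * ((1 - s) * s ^ j * g (s * y))\<bar> \<partial>lborel)"
    unfolding hardy_avg_def set_lebesgue_integral_def by (simp add: integral_abs_bound)
  also have "\<dots> \<le> (\<integral>s. indicator {0..1} s * \<bar>g (s * y)\<bar> \<partial>lborel)"
    using bound by (intro integral_mono i1 Bochner_Integration.integrable_bound[OF i1]) auto
  finally show ?thesis
    by (simp add: set_lebesgue_integral_def)
qed

lemma ennreal_powr_abs_hardy_avg_le:
  fixes \<phi> :: "real \<Rightarrow> real"
  assumes p: "1 \<le> p" and [measurable]: "\<phi> \<in> borel_measurable borel"
    and ig: "set_integrable lborel {0..1} (\<lambda>s. \<phi> (s * y))"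
  shows "ennreal (\<bar>hardy_avg j \<phi> y\<bar> powr p) \<le> ennreal (2 powr (p - 1)) *
    (\<integral>\<^sup>+s. ennreal (indicator {0..1} s * (s powr ((p - 1) / 2) * \<bar>\<phi> (s * y)\<bar> powr p)) \<partial>lborel)"
proof -
  define G where "G s = indicator {0..1} s * (s powr ((p - 1) / 2) * \<bar>\<phi> (s * y)\<bar> powr p)" for s
  have [measurable]: "G \<in> borel_measurable borel"
    unfolding G_def by measurable
  have G0: "0 \<le> G s" for s
    unfolding G_def by auto
  show ?thesis
  proof (cases "(\<integral>\<^sup>+s. ennreal (G s) \<partial>lborel) = \<infinity>")
    case True
    then show ?thesis
      unfolding G_def by (simp add: ennreal_mult_top)
  next
    case False
    then have iG: "integrable lborel G"
      using G0 by (intro integrableI_nonneg) (auto simp: less_top)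
    have "\<bar>hardy_avg j \<phi> y\<bar> powr p \<le> (LINT s:{0..1}|lborel. \<bar>\<phi> (s * y)\<bar>) powr p"
      using abs_hardy_avg_le[OF _ ig] p by (intro powr_mono2) auto
    also have "\<dots> \<le> 2 powr (p - 1) * (LINT s:{0..1}|lborel. s powr ((p - 1) / 2) * \<bar>\<phi> (s * y)\<bar> powr p)"
      using p set_integrable_abs[OF ig] iG unfolding G_def set_integrable_def
      by (intro powr_set_integral_01_le) (auto simp: set_integrable_def)
    also have "\<dots> = 2 powr (p - 1) * (\<integral>s. G s \<partial>lborel)"
      unfolding G_def set_lebesgue_integral_def by simp
    finally have "ennreal (\<bar>hardy_avg j \<phi> y\<bar> powr p) \<le> ennreal (2 powr (p - 1)) * ennreal (\<integral>s. G s \<partial>lborel)"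
      by (simp add: ennreal_mult'[symmetric] ennreal_leI)
    also have "ennreal (\<integral>s. G s \<partial>lborel) = (\<integral>\<^sup>+s. ennreal (G s) \<partial>lborel)"
      using G0 by (intro nn_integral_eq_integral[OF iG, symmetric]) auto
    finally show ?thesis
      unfolding G_def .
  qed
qed

lemma nn_integral_Ioi_dilation_powr:
  fixes \<phi> :: "real \<Rightarrow> real"
  assumes s: "0 < s" and [measurable]: "\<phi> \<in> borel_measurable borel"
  shows "(\<integral>\<^sup>+y. ennreal (indicator {0<..} y * (s powr ((p - 1) / 2) * \<bar>\<phi> (s * y)\<bar> powr p)) \<partial>lborel)
    = ennreal (s powr ((p - 3) / 2)) * (\<integral>\<^sup>+u. ennreal (indicator {0<..} u * \<bar>\<phi> u\<bar> powr p) \<partial>lborel)"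
proof -
  define f where "f u = ennreal (indicator {0<..} u * \<bar>\<phi> u\<bar> powr p)" for u
  have [measurable]: "f \<in> borel_measurable borel"
    unfolding f_def by measurable
  have "s powr ((p - 1) / 2) = s powr ((p - 3) / 2 + 1)"
    by (rule arg_cong[where f = "\<lambda>e. s powr e"]) (simp add: field_simps)
  also have "\<dots> = s powr ((p - 3) / 2) * s"
    using s by (simp add: powr_add)
  finally have exponent: "s powr ((p - 1) / 2) = s powr ((p - 3) / 2) * s" .
  have "ennreal (indicator {0<..} y * (s powr ((p - 1) / 2) * \<bar>\<phi> (s * y)\<bar> powr p))
      = ennreal (s powr ((p - 3) / 2)) * (ennreal s * f (s * y))" for y
  proof -
    have "indicator {0<..} y = (indicator {0<..} (s * y) :: real)"
      using s by (auto simp: indicator_def zero_less_mult_iff)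
    then show ?thesis
      unfolding f_def exponent using s by (simp add: ennreal_mult'[symmetric] mult_ac)
  qed
  then have "(\<integral>\<^sup>+y. ennreal (indicator {0<..} y * (s powr ((p - 1) / 2) * \<bar>\<phi> (s * y)\<bar> powr p)) \<partial>lborel)
      = ennreal (s powr ((p - 3) / 2)) * (ennreal s * (\<integral>\<^sup>+y. f (s * y) \<partial>lborel))"
    by (simp add: nn_integral_cmult)
  then show ?thesis
    using nn_integral_lborel_scale[OF s, of f] unfolding f_def by simp
qed

lemma nn_integral_hardy_avg_powr_le:
  fixes \<phi> :: "real \<Rightarrow> real"
  assumes p: "1 < p" and [measurable]: "\<phi> \<in> borel_measurable borel"
    and Lp: "set_integrable lborel {0<..} (\<lambda>x. \<bar>\<phi> x\<bar> powr p)"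
  shows "(\<integral>\<^sup>+y. ennreal (indicator {0<..} y * \<bar>hardy_avg j \<phi> y\<bar> powr p) \<partial>lborel)
      \<le> ennreal (2 powr p / (p - 1) * (LINT y:{0<..}|lborel. \<bar>\<phi> y\<bar> powr p))"
proof -
  define P where "P = (LINT y:{0<..}|lborel. \<bar>\<phi> y\<bar> powr p)"
  have "0 \<le> P"
    unfolding P_def set_lebesgue_integral_def by (intro integral_nonneg_AE) auto
  have nn_P: "(\<integral>\<^sup>+u. ennreal (indicator {0<..} u * \<bar>\<phi> u\<bar> powr p) \<partial>lborel) = ennreal P"
    using Lp unfolding P_def set_integrable_def set_lebesgue_integral_def
    by (subst nn_integral_eq_integral) auto
  define g where "g y s = indicator {0<..} y * (indicator {0..1} s * (s powr ((p - 1) / 2) * \<bar>\<phi> (s * y)\<bar> powr p))" for y s :: real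
  have [measurable]: "(\<lambda>(y, s). g y s) \<in> borel_measurable (lborel \<Otimes>\<^sub>M lborel)"
    unfolding g_def by measurable
  have pointwise: "ennreal (indicator {0<..} y * \<bar>hardy_avg j \<phi> y\<bar> powr p) \<le>
      ennreal (2 powr (p - 1)) * (\<integral>\<^sup>+s. ennreal (g y s) \<partial>lborel)" for y :: real
  proof (cases "0 < y")
    case True
    then have "set_integrable lborel {0..1} (\<lambda>s. \<phi> (s * y))"
      using p by (intro Lp_imp_set_integrable_dilation[OF _ _ Lp]) auto
    then show ?thesis
      using True p unfolding g_def by (simp add: ennreal_powr_abs_hardy_avg_le)
  qed (simp add: g_def)
  have inner: "(\<integral>\<^sup>+y. ennreal (g y s) \<partial>lborel) = ennreal (indicator {0..1} s * s powr ((p - 3) / 2)) * ennreal P" for s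
  proof (cases "s \<in> {0<..1}")
    case True
    then show ?thesis
      using nn_integral_Ioi_dilation_powr[of s \<phi> p] nn_P unfolding g_def by (simp add: mult.assoc)
  next
    case False
    then have "s \<notin> {0..1} \<or> s = 0"
      by auto
    then show ?thesis
      unfolding g_def by auto
  qed
  have "(\<integral>\<^sup>+y. ennreal (indicator {0<..} y * \<bar>hardy_avg j \<phi> y\<bar> powr p) \<partial>lborel) \<le>
      (\<integral>\<^sup>+y. ennreal (2 powr (p - 1)) * (\<integral>\<^sup>+s. ennreal (g y s) \<partial>lborel) \<partial>lborel)"
    by (intro nn_integral_mono pointwise)
  also have "\<dots> = ennreal (2 powr (p - 1)) * (\<integral>\<^sup>+s. (\<integral>\<^sup>+y. ennreal (g y s) \<partial>lborel) \<partial>lborel)"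
    by (subst lborel_pair.Fubini') (simp_all add: nn_integral_cmult)
  also have "\<dots> = ennreal (2 powr (p - 1)) * (ennreal (1 / ((p - 3) / 2 + 1)) * ennreal P)"
    using p unfolding inner by (simp add: nn_integral_multc nn_integral_powr_01)
  also have "\<dots> = ennreal (2 powr p / (p - 1) * P)"
  proof -
    have "2 powr (p - 1) * (1 / ((p - 3) / 2 + 1) * P) = 2 powr p / (p - 1) * P"
      using p by (simp add: powr_diff field_simps)
    then show ?thesis
      using \<open>0 \<le> P\<close> by (metis ennreal_mult' ennreal_mult'' powr_ge_zero)
  qed
  finally show ?thesis
    unfolding P_def .
qed

lemma hardy_avg_Lp:
  fixes \<phi> :: "real \<Rightarrow> real"
  assumes p: "1 < p" and [measurable]: "\<phi> \<in> borel_measurable borel" and Lp: "in_Lp p \<phi>"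
  shows "in_Lp p (hardy_avg j \<phi>)"
    and "(LINT y:{0<..}|lborel. \<bar>hardy_avg j \<phi> y\<bar> powr p) \<le> 2 powr p / (p - 1) * (LINT y:{0<..}|lborel. \<bar>\<phi> y\<bar> powr p)"
proof -
  have bound: "(\<integral>\<^sup>+y. ennreal (indicator {0<..} y * \<bar>hardy_avg j \<phi> y\<bar> powr p) \<partial>lborel)
      \<le> ennreal (2 powr p / (p - 1) * (LINT y:{0<..}|lborel. \<bar>\<phi> y\<bar> powr p))"
    using Lp unfolding in_Lp_def by (intro nn_integral_hardy_avg_powr_le p) auto
  then have int: "integrable lborel (\<lambda>y. indicator {0<..} y * \<bar>hardy_avg j \<phi> y\<bar> powr p)"
    by (intro integrableI_nonneg) (auto simp: less_top[symmetric] top_unique)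
  then show "in_Lp p (hardy_avg j \<phi>)"
    by (simp add: in_Lp_def set_integrable_def set_borel_measurable_def)
  have "ennreal (LINT y:{0<..}|lborel. \<bar>hardy_avg j \<phi> y\<bar> powr p)
      = (\<integral>\<^sup>+y. ennreal (indicator {0<..} y * \<bar>hardy_avg j \<phi> y\<bar> powr p) \<partial>lborel)"
    unfolding set_lebesgue_integral_def using int by (subst nn_integral_eq_integral) auto
  with bound have "ennreal (LINT y:{0<..}|lborel. \<bar>hardy_avg j \<phi> y\<bar> powr p)
      \<le> ennreal (2 powr p / (p - 1) * (LINT y:{0<..}|lborel. \<bar>\<phi> y\<bar> powr p))"
    by simp
  moreover have "0 \<le> 2 powr p / (p - 1) * (LINT y:{0<..}|lborel. \<bar>\<phi> y\<bar> powr p)"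
    using p unfolding set_lebesgue_integral_def by (auto intro!: integral_nonneg_AE)
  ultimately show "(LINT y:{0<..}|lborel. \<bar>hardy_avg j \<phi> y\<bar> powr p)
      \<le> 2 powr p / (p - 1) * (LINT y:{0<..}|lborel. \<bar>\<phi> y\<bar> powr p)"
    using ennreal_le_iff by blast
qed

lemma Lp_norm_hardy_avg_le:
  fixes \<phi> :: "real \<Rightarrow> real"
  assumes p: "1 < p" and [measurable]: "\<phi> \<in> borel_measurable borel" and Lp: "in_Lp p \<phi>"
  shows "Lp_norm p (hardy_avg j \<phi>) \<le> (2 powr p / (p - 1)) powr (1 / p) * Lp_norm p \<phi>"
proof -
  have "0 \<le> (LINT y:{0<..}|lborel. \<bar>hardy_avg j \<phi> y\<bar> powr p)"
    unfolding set_lebesgue_integral_def by (intro integral_nonneg_AE) auto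
  then have "Lp_norm p (hardy_avg j \<phi>) \<le> (2 powr p / (p - 1) * (LINT y:{0<..}|lborel. \<bar>\<phi> y\<bar> powr p)) powr (1 / p)"
    unfolding Lp_norm_def using hardy_avg_Lp(2)[OF assms] p by (intro powr_mono2) auto
  also have "\<dots> = (2 powr p / (p - 1)) powr (1 / p) * Lp_norm p \<phi>"
    unfolding Lp_norm_def using p by (intro powr_mult)
  finally show ?thesis .
qed

lemma integrable_hardy_kernel:
  fixes \<eta> :: "real \<Rightarrow> real"
  assumes [measurable]: "\<eta> \<in> borel_measurable borel" and \<eta>: "set_integrable lborel {0..b} \<eta>"
    and ab: "0 \<le> a" "a \<le> b"
  shows "integrable (lborel \<Otimes>\<^sub>M lborel)
    (\<lambda>(s, y). indicator {0..1} s * indicator {a..b} y * ((1 - s) * s ^ Suc j * \<eta> (s * y)))"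
proof (rule integrable_pair_lborel_fibre_bound)
  define B where "B = (\<integral>\<^sup>+u. ennreal (indicator {0..b} u * \<bar>\<eta> u\<bar>) \<partial>lborel)"
  have "integrable lborel (\<lambda>u. indicator {0..b} u * \<bar>\<eta> u\<bar>)"
    using set_integrable_abs[OF \<eta>] by (simp add: set_integrable_def)
  then show "B < \<infinity>"
    unfolding B_def by (simp add: integrable_iff_bounded)
  fix s :: real
  show "(\<integral>\<^sup>+y. ennreal \<bar>case (s, y) of (s, y) \<Rightarrow>
      indicator {0..1} s * indicator {a..b} y * ((1 - s) * s ^ Suc j * \<eta> (s * y))\<bar> \<partial>lborel)
    \<le> B * indicator {0..1} s"
  proof (cases "s \<in> {0<..1}")
    case True
    then have s: "0 < s" "s \<le> 1" by auto
    define f where "f u = ennreal (indicator {s*a..s*b} u * \<bar>\<eta> u\<bar>)" for u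
    have [measurable]: "f \<in> borel_measurable borel"
      unfolding f_def by measurable
    have "(\<integral>\<^sup>+y. ennreal \<bar>indicator {0..1} s * indicator {a..b} y * ((1 - s) * s ^ Suc j * \<eta> (s * y))\<bar> \<partial>lborel)
        = (\<integral>\<^sup>+y. ennreal ((1 - s) * s ^ j) * (ennreal s * f (s * y)) \<partial>lborel)"
    proof (intro nn_integral_cong)
      fix y :: real
      have "indicator {a..b} y = (indicator {s*a..s*b} (s * y) :: real)"
        using s by (auto simp: indicator_def)
      then show "ennreal \<bar>indicator {0..1} s * indicator {a..b} y * ((1 - s) * s ^ Suc j * \<eta> (s * y))\<bar>
          = ennreal ((1 - s) * s ^ j) * (ennreal s * f (s * y))"
        unfolding f_def using s by (simp add: ennreal_mult'[symmetric] abs_mult mult_ac)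
    qed
    also have "\<dots> = ennreal ((1 - s) * s ^ j) * (\<integral>\<^sup>+u. f u \<partial>lborel)"
      using nn_integral_lborel_scale[OF s(1), of f] by (simp add: nn_integral_cmult)
    also have "\<dots> \<le> 1 * B"
    proof (intro mult_mono)
      show "ennreal ((1 - s) * s ^ j) \<le> 1"
        using s by (auto intro!: mult_le_one power_le_one)
      have "0 \<le> s * a" "s * b \<le> b"
        using s ab by (simp_all add: mult_left_le_one_le)
      then show "(\<integral>\<^sup>+u. f u \<partial>lborel) \<le> B"
        unfolding B_def f_def by (intro nn_integral_mono) (auto simp: indicator_def)
    qed auto
    finally show ?thesis
      using s by simp
  next
    case False
    then have "s \<notin> {0..1} \<or> s = 0"
      by auto
    then show ?thesis
      by auto
  qed
qed measurable

lemma set_integral_hardy_avg_Suc: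
  assumes prim: "primitive_nonneg \<psi> \<eta>" and [measurable]: "\<eta> \<in> borel_measurable borel"
    and ab: "0 \<le> a" "a \<le> b"
  shows "set_integrable lborel {a..b} (hardy_avg (Suc j) \<eta>)"
    and "(LINT y:{a..b}|lborel. hardy_avg (Suc j) \<eta> y) =
      (LINT s:{0..1}|lborel. (1 - s) * s ^ j * (\<psi> (s * b) - \<psi> (s * a)))"
proof -
  define K where "K s y = indicator {0..1} s * indicator {a..b} y * ((1 - s) * s ^ Suc j * \<eta> (s * y))" for s y :: real
  have "set_integrable lborel {0..b} \<eta>"
    using prim ab unfolding primitive_nonneg_def by auto
  then have K: "integrable (lborel \<Otimes>\<^sub>M lborel) (\<lambda>(s, y). K s y)"
    unfolding K_def using ab by (intro integrable_hardy_kernel) auto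
  have K_y: "(\<integral>s. K s y \<partial>lborel) = indicator {a..b} y * hardy_avg (Suc j) \<eta> y" for y
  proof -
    have "(\<lambda>s. K s y) = (\<lambda>s. indicator {a..b} y * (indicator {0..1} s * ((1 - s) * s ^ Suc j * \<eta> (s * y))))"
      by (auto simp: K_def fun_eq_iff mult_ac)
    then show ?thesis
      unfolding hardy_avg_def set_lebesgue_integral_def by simp
  qed
  have K_s: "(\<integral>y. K s y \<partial>lborel) = indicator {0..1} s * ((1 - s) * s ^ j * (\<psi> (s * b) - \<psi> (s * a)))" for s
  proof (cases "s \<in> {0<..1}")
    case True
    have "(\<integral>y. K s y \<partial>lborel) = (1 - s) * s ^ Suc j * (LINT y:{a..b}|lborel. \<eta> (s * y))"
      unfolding K_def set_lebesgue_integral_def using True by (simp add: mult_ac)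
    also have "\<dots> = (1 - s) * s ^ Suc j * ((\<psi> (s * b) - \<psi> (s * a)) / s)"
      using primitive_nonneg_dilation[OF prim _ ab, of s] True by simp
    finally show ?thesis
      using True by (simp add: power_Suc)
  next
    case False
    then have "s \<notin> {0..1} \<or> s = 0"
      by auto
    then show ?thesis
      unfolding K_def by auto
  qed
  show "set_integrable lborel {a..b} (hardy_avg (Suc j) \<eta>)"
    using lborel_pair.integrable_snd[OF K] unfolding K_y by (simp add: set_integrable_def)
  have "(LINT y:{a..b}|lborel. hardy_avg (Suc j) \<eta> y) = (\<integral>y. (\<integral>s. K s y \<partial>lborel) \<partial>lborel)"
    unfolding K_y set_lebesgue_integral_def by simp
  also have "\<dots> = (\<integral>s. (\<integral>y. K s y \<partial>lborel) \<partial>lborel)"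
    using K by (intro lborel_pair.Fubini_integral) simp
  also have "\<dots> = (LINT s:{0..1}|lborel. (1 - s) * s ^ j * (\<psi> (s * b) - \<psi> (s * a)))"
    unfolding K_s set_lebesgue_integral_def by simp
  finally show "(LINT y:{a..b}|lborel. hardy_avg (Suc j) \<eta> y) =
      (LINT s:{0..1}|lborel. (1 - s) * s ^ j * (\<psi> (s * b) - \<psi> (s * a)))" .
qed

lemma primitive_nonneg_hardy_avg:
  assumes prim: "primitive_nonneg \<psi> \<eta>" and [measurable]: "\<eta> \<in> borel_measurable borel"
  shows "primitive_nonneg (hardy_avg j \<psi>) (hardy_avg (Suc j) \<eta>)"
  unfolding primitive_nonneg_def
proof (intro allI impI conjI)
  fix a b :: real
  assume ab: "0 \<le> a \<and> a \<le> b"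
  then show "set_integrable lborel {a..b} (hardy_avg (Suc j) \<eta>)"
    by (intro set_integral_hardy_avg_Suc(1)[OF prim]) auto
  have "set_integrable lborel {0..1} (\<lambda>s. (1 - s) * s ^ j * \<psi> (s * c))" if "0 \<le> c" for c
  proof -
    have cont: "continuous_on {0..c} \<psi>"
      using primitive_nonneg_continuous_on[OF prim that] .
    show ?thesis
      by (intro borel_integrable_atLeastAtMost' continuous_intros continuous_on_compose2[OF cont])
         (use that in \<open>auto intro!: mult_left_le_one_le\<close>)
  qed
  then have "hardy_avg j \<psi> b - hardy_avg j \<psi> a
      = (LINT s:{0..1}|lborel. (1 - s) * s ^ j * \<psi> (s * b) - (1 - s) * s ^ j * \<psi> (s * a))"
    unfolding hardy_avg_def using ab by (simp add: set_integral_diff(2))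
  also have "\<dots> = (LINT s:{0..1}|lborel. (1 - s) * s ^ j * (\<psi> (s * b) - \<psi> (s * a)))"
    by (simp only: right_diff_distrib)
  also have "\<dots> = (LINT y:{a..b}|lborel. hardy_avg (Suc j) \<eta> y)"
    using ab by (intro set_integral_hardy_avg_Suc(2)[symmetric] prim) auto
  finally show "hardy_avg j \<psi> b - hardy_avg j \<psi> a = (LINT y:{a..b}|lborel. hardy_avg (Suc j) \<eta> y)" .
qed

section \<open>Taylor's formula and the derivative of the operator I\<close>

lemma set_integral_taylor_remainder:
  assumes f': "primitive_nonneg f f'" and f'': "primitive_nonneg f' f''"
    and [measurable]: "f'' \<in> borel_measurable borel" and y: "0 \<le> y"
  shows "(LINT u:{0..y}|lborel. f'' u * (y - u)) = f y - f 0 - y * f' 0"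
proof -
  \<comment> \<open>both sides are iterated integrals of \<open>f'' u\<close> over the triangle \<open>0 \<le> u \<le> t \<le> y\<close>\<close>
  define K where "K t u = indicator {0..y} t * (indicator {0..y} u * (if u \<le> t then f'' u else 0))" for t u :: real
  have [measurable]: "(\<lambda>(t, u). K t u) \<in> borel_measurable (lborel \<Otimes>\<^sub>M lborel)"
    unfolding K_def by measurable
  define B where "B = (\<integral>\<^sup>+u. ennreal (indicator {0..y} u * \<bar>f'' u\<bar>) \<partial>lborel)"
  have "integrable lborel (\<lambda>u. indicator {0..y} u * \<bar>f'' u\<bar>)"
    using f'' y set_integrable_abs[of lborel "{0..y}" f''] unfolding primitive_nonneg_def
    by (auto simp: set_integrable_def)
  then have "B < \<infinity>"
    unfolding B_def by (simp add: integrable_iff_bounded)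
  moreover have "(\<integral>\<^sup>+u. ennreal \<bar>K t u\<bar> \<partial>lborel) \<le> B * indicator {0..y} t" for t
    unfolding B_def K_def by (cases "t \<in> {0..y}") (auto intro!: nn_integral_mono simp: indicator_def)
  ultimately have K: "integrable (lborel \<Otimes>\<^sub>M lborel) (\<lambda>(t, u). K t u)"
    by (intro integrable_pair_lborel_fibre_bound) auto
  have K_t: "(\<integral>u. K t u \<partial>lborel) = indicator {0..y} t * (f' t - f' 0)" for t
  proof (cases "t \<in> {0..y}")
    case True
    then have "(\<lambda>u. K t u) = (\<lambda>u. indicator {0..t} u * f'' u)"
      by (auto simp: K_def fun_eq_iff indicator_def)
    then show ?thesis
      using f'' True unfolding primitive_nonneg_def set_lebesgue_integral_def by auto
  qed (simp add: K_def)
  have K_u: "(\<integral>t. K t u \<partial>lborel) = indicator {0..y} u * (f'' u * (y - u))" for u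
  proof (cases "u \<in> {0..y}")
    case True
    then have "(\<lambda>t. K t u) = (\<lambda>t. indicator {u..y} t * f'' u)"
      by (auto simp: K_def fun_eq_iff indicator_def)
    then show ?thesis
      using True by (simp add: mult.commute)
  qed (simp add: K_def)
  have int_f': "set_integrable lborel {0..y} f'"
    using f' y unfolding primitive_nonneg_def by auto
  have "(LINT u:{0..y}|lborel. f'' u * (y - u)) = (\<integral>u. (\<integral>t. K t u \<partial>lborel) \<partial>lborel)"
    unfolding K_u set_lebesgue_integral_def by simp
  also have "\<dots> = (\<integral>t. (\<integral>u. K t u \<partial>lborel) \<partial>lborel)"
    using K by (intro lborel_pair.Fubini_integral) simp
  also have "\<dots> = (LINT t:{0..y}|lborel. f' t - f' 0)"
    unfolding K_t set_lebesgue_integral_def by simp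
  also have "\<dots> = (LINT t:{0..y}|lborel. f' t) - y * f' 0"
  proof -
    have "set_integrable lborel {0..y} (\<lambda>t. f' 0)"
      unfolding set_integrable_def using y by (intro integrable_indicator) auto
    then show ?thesis
      using int_f' y by (simp add: set_integral_diff(2) set_integral_const)
  qed
  also have "(LINT t:{0..y}|lborel. f' t) = f y - f 0"
    using f' y unfolding primitive_nonneg_def by auto
  finally show ?thesis .
qed

lemma taylor_hardy_avg:
  assumes "primitive_nonneg f f'" "primitive_nonneg f' f''"
    and [measurable]: "f'' \<in> borel_measurable borel" and y: "0 < y"
  shows "f y - f 0 - y * f' 0 = y\<^sup>2 * hardy_avg 0 f'' y"
proof -
  have "y * hardy_avg 0 f'' y = (LINT s:{0..1}|lborel. f'' (y * s) * (y - y * s))"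
    unfolding hardy_avg_def set_lebesgue_integral_def
    by (simp add: algebra_simps flip: integral_mult_right_zero)
  also have "\<dots> = (LINT u:{0..y}|lborel. f'' u * (y - u)) / y"
    using set_integral_scale[OF y, where g = "\<lambda>u. f'' u * (y - u)"] by simp
  also have "\<dots> = (f y - f 0 - y * f' 0) / y"
    using assms by (simp add: set_integral_taylor_remainder)
  finally show ?thesis
    using y by (simp add: field_simps power2_eq_square)
qed

lemma Iop_has_real_derivative:
  assumes F01: "primitive_nonneg (F 0) (F 1)" and F12: "primitive_nonneg (F 1) (F 2)"
    and [measurable]: "F 0 \<in> borel_measurable borel" "F 2 \<in> borel_measurable borel"
    and loc: "\<And>z. 0 \<le> z \<Longrightarrow> set_integrable lborel {0..z} (hardy_avg 0 (F 2))"
    and x: "0 < x"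
  shows "(Iop F has_real_derivative hardy_avg 0 (F 2) x) (at x)"
proof -
  define q where "q y = (F 0 y - F 0 0 - y * F 1 0) / y\<^sup>2" for y
  have [measurable]: "q \<in> borel_measurable borel"
    unfolding q_def by measurable
  have q: "q y = hardy_avg 0 (F 2) y" if "0 < y" for y
    using taylor_hardy_avg[OF F01 F12 _ that] that by (simp add: q_def)
  have q_int: "set_integrable lborel {0..z} q" if "0 \<le> z" for z
  proof -
    have "AE y \<in> {0..z} in lborel. hardy_avg 0 (F 2) y = q y"
      using AE_lborel_singleton[of 0] by eventually_elim (auto simp: q)
    then show ?thesis
      using loc[OF that] set_integrable_cong_AE[of "hardy_avg 0 (F 2)" lborel q] by auto
  qed
  have Iop: "Iop F z = integral {0..z} q" if "0 \<le> z" for z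
    unfolding Iop_def q_def[symmetric] using set_borel_integral_eq_integral(2)[OF q_int[OF that]] .
  have "continuous_on {0..2 * x} (F 0)"
    using primitive_nonneg_continuous_on[OF F01] x by simp
  then have "isCont (F 0) x"
    by (rule continuous_on_interior) (use x in simp)
  then have "isCont q x"
    unfolding q_def using x by (intro continuous_intros) auto
  moreover have "q integrable_on {0..2 * x}"
    using set_borel_integral_eq_integral(1)[OF q_int] x by simp
  ultimately have "((\<lambda>z. integral {0..z} q) has_vector_derivative q x) (at x within {0..2 * x} - {})"
    using x by (intro integral_has_vector_derivative_continuous_at) (auto intro: continuous_at_imp_continuous_at_within)
  moreover have "at x within {0..2 * x} = at x"
    by (rule at_within_interior) (use x in simp)
  ultimately have "((\<lambda>z. integral {0..z} q) has_real_derivative q x) (at x)"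
    by (simp add: has_real_derivative_iff_has_vector_derivative)
  then have "(Iop F has_real_derivative q x) (at x)"
    by (rule has_field_derivative_transform_within_open[where S = "{0<..}"]) (use x Iop in auto)
  then show ?thesis
    using q[OF x] by simp
qed

section \<open>Sobolev bounds\<close>

lemma sobolev_norm_shift_le: "sobolev_norm k p (\<lambda>j. F (j + 2)) \<le> sobolev_norm (k + 2) p F"
proof -
  have "sobolev_norm (k + 2) p F = Lp_norm p (F 0) + (Lp_norm p (F 1) + sobolev_norm k p (\<lambda>j. F (j + 2)))"
    unfolding sobolev_norm_def by (simp add: sum.atMost_Suc_shift del: sum.atMost_Suc)
  moreover have "0 \<le> Lp_norm p g" for g
    unfolding Lp_norm_def by simp
  ultimately show ?thesis
    using add_increasing by simp
qed

lemma sobolev_hardy_avg: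
  assumes p: "1 < p" and G: "sobolev (k + 2) p G"
    and [measurable]: "\<And>j. j \<le> k + 2 \<Longrightarrow> G j \<in> borel_measurable borel"
  shows "sobolev k p (\<lambda>j. hardy_avg j (G (j + 2)))"
  unfolding sobolev_altdef
proof (intro conjI allI impI)
  fix j
  assume "j \<le> k"
  then show "in_Lp p (hardy_avg j (G (j + 2)))"
    using G unfolding sobolev_altdef by (intro hardy_avg_Lp(1) p) auto
next
  fix j
  assume "j < k"
  then have "primitive_nonneg (hardy_avg j (G (j + 2))) (hardy_avg (Suc j) (G (Suc (j + 2))))"
    using G unfolding sobolev_altdef by (intro primitive_nonneg_hardy_avg) auto
  then show "primitive_nonneg (hardy_avg j (G (j + 2))) (hardy_avg (Suc j) (G (Suc j + 2)))"
    by simp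
qed

lemma hardy_avg_zero_extension_Iop:
  fixes F :: "nat \<Rightarrow> real \<Rightarrow> real"
  assumes p: "1 < p" and F: "sobolev (k + 2) p F"
  defines "H \<equiv> \<lambda>j. hardy_avg j (\<lambda>x. indicator {0..} x * F (j + 2) x)"
  shows "sobolev k p H"
    and "\<And>x. 0 < x \<Longrightarrow> (Iop F has_real_derivative H 0 x) (at x)"
    and "\<And>j. j \<le> k \<Longrightarrow> Lp_norm p (H j) \<le> (2 powr p / (p - 1)) powr (1 / p) * Lp_norm p (F (j + 2))"
proof -
  \<comment> \<open>\<^const>\<open>in_Lp\<close> only makes \<open>F j\<close> measurable on \<open>(0,\<infinity>)\<close>; the product-measure arguments
    need Borel functions on the whole line, and cutting off at \<open>0\<close> changes neither
    \<^const>\<open>Iop\<close> nor the norms.\<close>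
  define G where "G = (\<lambda>j x. indicator {0..} x * F j x)"
  have H_G: "H j = hardy_avg j (G (j + 2))" for j
    unfolding H_def G_def ..
  have G: "sobolev (k + 2) p G"
    unfolding G_def using sobolev_zero_extension[OF F] .
  have G_meas [measurable]: "G j \<in> borel_measurable borel" if "j \<le> k + 2" for j
    using F that unfolding sobolev_def in_Lp_def G_def by (intro borel_measurable_zero_extension) auto
  show H: "sobolev k p H"
    unfolding H_G using sobolev_hardy_avg[OF p G] by simp
  show "(Iop F has_real_derivative H 0 x) (at x)" if "0 < x" for x
  proof -
    have "primitive_nonneg (G 0) (G 1)" "primitive_nonneg (G 1) (G 2)"
      using G unfolding sobolev_altdef by (auto simp flip: Suc_1)
    moreover have "in_Lp p (H 0)"
      using H unfolding sobolev_altdef by simp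
    then have "set_integrable lborel {0..z} (hardy_avg 0 (G 2))" for z
      using p unfolding in_Lp_def H_G
      by (intro Lp_imp_set_integrable_Icc[of p]) (auto simp: numeral_2_eq_2)
    ultimately have "(Iop G has_real_derivative hardy_avg 0 (G 2) x) (at x)"
      using that by (intro Iop_has_real_derivative G_meas) auto
    moreover have "Iop G = Iop F"
      unfolding G_def by (rule Iop_zero_extension)
    ultimately show ?thesis
      by (simp add: H_G numeral_2_eq_2)
  qed
  show "Lp_norm p (H j) \<le> (2 powr p / (p - 1)) powr (1 / p) * Lp_norm p (F (j + 2))" if "j \<le> k" for j
    using Lp_norm_hardy_avg_le[OF p G_meas, of "j + 2" j] G that
    unfolding H_G G_def Lp_norm_zero_extension sobolev_altdef by simp
qed

theorem lemma2p4:
  fixes k :: nat and p :: real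
  assumes "1 < p"
  shows "\<exists>C>0. \<forall>F. sobolev (k + 2) p F \<longrightarrow>
           (\<exists>H. sobolev k p H \<and>
                 (\<forall>x>0. (Iop F has_real_derivative H 0 x) (at x)) \<and>
                 sobolev_norm k p H \<le> C * sobolev_norm k p (\<lambda>j. F (j + 2)) \<and>
                 C * sobolev_norm k p (\<lambda>j. F (j + 2)) \<le> C * sobolev_norm (k + 2) p F)"
proof -
  define C where "C = (2 powr p / (p - 1)) powr (1 / p)"
  have "0 < C"
    using assms by (simp add: C_def)
  moreover have "\<exists>H. sobolev k p H \<and> (\<forall>x>0. (Iop F has_real_derivative H 0 x) (at x)) \<and>
      sobolev_norm k p H \<le> C * sobolev_norm k p (\<lambda>j. F (j + 2)) \<and>
      C * sobolev_norm k p (\<lambda>j. F (j + 2)) \<le> C * sobolev_norm (k + 2) p F"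
    if F: "sobolev (k + 2) p F" for F
  proof -
    let ?H = "\<lambda>j. hardy_avg j (\<lambda>x. indicator {0..} x * F (j + 2) x)"
    note H = hardy_avg_zero_extension_Iop[OF assms F]
    have "sobolev_norm k p ?H \<le> C * sobolev_norm k p (\<lambda>j. F (j + 2))"
      unfolding sobolev_norm_def sum_distrib_left C_def using H(3) by (intro sum_mono) simp
    moreover have "C * sobolev_norm k p (\<lambda>j. F (j + 2)) \<le> C * sobolev_norm (k + 2) p F"
      using sobolev_norm_shift_le \<open>0 < C\<close> by (intro mult_left_mono) auto
    ultimately show ?thesis
      using H(1,2) by blast
  qed
  ultimately show ?thesis
    by blast
qed

end
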